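(* Let $\theta_0\in\mathbb{R}$, let $\hat\theta_u$ and $\hat\theta_b'$ be real random variables with finite second moments such that $\mathbb{E}[\hat\theta_u]=\theta_0$ and $\mathbb{E}[\hat\theta_b']=\theta_0$, and let $(\mu_k)_{k\ge1}$ be a sequence of real numbers with $\mu_k\to\infty$ as $k\to\infty$. Define $\hat\theta_b^{(k)}=\hat\theta_b'+\mu_k$, so that $\mathrm{Var}(\hat\theta_b^{(k)})=\sigma^2_b:=\mathrm{Var}(\hat\theta_b')$ and $\mathrm{Cov}(\hat\theta_b^{(k)},\hat\theta_u)=\sigma_{bu}:=\mathrm{Cov}(\hat\theta_b',\hat\theta_u)$ for all $k$. Let $\sigma^2_u=\mathrm{Var}(\hat\theta_u)$ and assume $\sigma^2_u>0$ and $\sigma^2_u+\sigma^2_b-2\sigma_{bu}>0$. For each $k$ define $$\hat\lambda^{(k)}=\frac{\sigma^2_u-\sigma_{bu}}{(\hat\theta_u-\hat\theta_b^{(k)})^2+\sigma^2_u+\sigma^2_b-2\sigma_{bu}},\qquad \hat\theta_{\hat\lambda}^{(k)}=\hat\lambda^{(k)}\hat\theta_b^{(k)}+(1-\hat\lambda^{(k)})\hat\theta_u .$$ Then $$\lim_{k\to\infty}\mathbb{E}\big[(\hat\theta_{\hat\lambda}^{(k)}-\theta_0)^2\big]=\sigma^2_u .$$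
   Context: $\hat\theta_u$ is an unbiased estimator of $\theta_0$, and $\hat\theta_b^{(k)}$ is a biased estimator with bias $\mu_k$; $\hat\theta_{\hat\lambda}^{(k)}$ is the combination estimator formed with known variances and covariance. *)

theory Defs
  imports "HOL-Probability.Probability"
begin

definition covariance :: "'a measure \<Rightarrow> ('a \<Rightarrow> real) \<Rightarrow> ('a \<Rightarrow> real) \<Rightarrow> real" where
  "covariance M X Y = integral\<^sup>L M (\<lambda>x. (X x - integral\<^sup>L M X) * (Y x - integral\<^sup>L M Y))"

end

theory Submission
  imports Defs
begin

text \<open>Write \<open>c = \<sigma>u2 - \<sigma>bu\<close>, \<open>s = \<sigma>u2 + \<sigma>b2 - 2 \<sigma>bu > 0\<close> and \<open>D\<^sub>k = Tu - Tb k\<close>.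
  The error of the combined estimator is \<open>(Tu - \<theta>\<^sub>0) - c D\<^sub>k / (D\<^sub>k\<^sup>2 + s)\<close>.
  Since \<open>t / (t\<^sup>2 + s)\<close> is bounded and vanishes at infinity, the correction term is
  uniformly bounded and tends to \<open>0\<close> pointwise because \<open>D\<^sub>k \<rightarrow> -\<infinity>\<close>.  Dominated
  convergence then turns the mean squared error into \<open>E[(Tu - \<theta>\<^sub>0)\<^sup>2] = \<sigma>u2\<close>.\<close>

lemma abs_divide_square_add_le:
  fixes t s :: real
  assumes "s > 0"
  shows "\<bar>t / (t\<^sup>2 + s)\<bar> \<le> 1 / s + 1"
proof -
  have pos: "t\<^sup>2 + s > 0"
    using assms by (simp add: add_nonneg_pos)
  show ?thesis
  proof (cases "\<bar>t\<bar> \<le> 1")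
    case True
    have "\<bar>t / (t\<^sup>2 + s)\<bar> \<le> 1 / (t\<^sup>2 + s)"
      using True pos by (simp add: divide_right_mono)
    also have "\<dots> \<le> 1 / s"
      using assms by (simp add: frac_le)
    finally show ?thesis
      by simp
  next
    case False
    then have "\<bar>t\<bar> * 1 \<le> \<bar>t\<bar> * \<bar>t\<bar>"
      by (intro mult_left_mono) auto
    then have "\<bar>t\<bar> \<le> t\<^sup>2"
      by (simp add: power2_eq_square)
    then have "\<bar>t / (t\<^sup>2 + s)\<bar> \<le> 1"
      using assms pos by simp
    moreover have "1 / s \<ge> 0"
      using assms by simp
    ultimately show ?thesis
      by linarith
  qed
qed

lemma tendsto_divide_square_add_at_infinity:
  fixes s :: real
  assumes "s > 0"
  shows "((\<lambda>t. t / (t\<^sup>2 + s)) \<longlongrightarrow> 0) at_infinity"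
proof (rule Lim_null_comparison)
  show "\<forall>\<^sub>F t in at_infinity. norm (t / (t\<^sup>2 + s)) \<le> norm (inverse t)"
  proof (rule eventually_mono[OF eventually_not_equal_at_infinity[of 0]])
    fix t :: real
    assume "t \<noteq> 0"
    have "\<bar>t\<bar> * \<bar>t\<bar> \<le> t\<^sup>2 + s"
      using assms by (simp add: abs_mult_self_eq power2_eq_square)
    then show "norm (t / (t\<^sup>2 + s)) \<le> norm (inverse t)"
      using \<open>t \<noteq> 0\<close> assms by (simp add: abs_inverse field_simps add_nonneg_pos)
  qed
  show "((\<lambda>t. norm (inverse t :: real)) \<longlongrightarrow> 0) at_infinity"
    by (intro tendsto_norm_zero tendsto_inverse_0)
qed

lemma square_diff_le: "(a - b)\<^sup>2 \<le> 2 * a\<^sup>2 + 2 * (b::real)\<^sup>2"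
proof -
  have "(a - b)\<^sup>2 = 2 * a\<^sup>2 + 2 * b\<^sup>2 - (a + b)\<^sup>2"
    by (simp add: power2_eq_square algebra_simps)
  then show ?thesis
    by simp
qed

lemma (in finite_measure) integral_square_diff_tendsto:
  fixes X :: "'a \<Rightarrow> real" and h :: "nat \<Rightarrow> 'a \<Rightarrow> real"
  assumes [measurable]: "X \<in> borel_measurable M" "\<And>k. h k \<in> borel_measurable M"
    and "integrable M (\<lambda>x. (X x)\<^sup>2)"
    and bounded: "\<And>k x. \<bar>h k x\<bar> \<le> B"
    and lim: "\<And>x. (\<lambda>k. h k x) \<longlonglongrightarrow> 0"
  shows "(\<lambda>k. \<integral>x. (X x - h k x)\<^sup>2 \<partial>M) \<longlonglongrightarrow> (\<integral>x. (X x)\<^sup>2 \<partial>M)"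
proof (rule integral_dominated_convergence[where w = "\<lambda>x. 2 * (X x)\<^sup>2 + 2 * B\<^sup>2"])
  show "integrable M (\<lambda>x. 2 * (X x)\<^sup>2 + 2 * B\<^sup>2)"
    using assms(3) by simp
  show "AE x in M. norm ((X x - h k x)\<^sup>2) \<le> 2 * (X x)\<^sup>2 + 2 * B\<^sup>2" for k
  proof (rule AE_I2)
    fix x
    have "\<bar>h k x\<bar>\<^sup>2 \<le> B\<^sup>2"
      by (rule power_mono[OF bounded abs_ge_zero])
    then show "norm ((X x - h k x)\<^sup>2) \<le> 2 * (X x)\<^sup>2 + 2 * B\<^sup>2"
      using square_diff_le[of "X x" "h k x"] by simp
  qed
  show "AE x in M. (\<lambda>k. (X x - h k x)\<^sup>2) \<longlonglongrightarrow> (X x)\<^sup>2"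
  proof (rule AE_I2)
    fix x
    have "(\<lambda>k. (X x - h k x)\<^sup>2) \<longlonglongrightarrow> (X x - 0)\<^sup>2"
      by (intro tendsto_intros lim)
    then show "(\<lambda>k. (X x - h k x)\<^sup>2) \<longlonglongrightarrow> (X x)\<^sup>2"
      by simp
  qed
qed simp_all

theorem proposition1:
  fixes M :: "'a measure" and \<theta>\<^sub>0 :: real
    and Tu Tb' :: "'a \<Rightarrow> real" and \<mu> :: "nat \<Rightarrow> real"
  defines "Tb \<equiv> (\<lambda>k x. Tb' x + \<mu> k)"
    and "\<sigma>u2 \<equiv> prob_space.variance M Tu"
    and "\<sigma>b2 \<equiv> prob_space.variance M Tb'"
    and "\<sigma>bu \<equiv> covariance M Tb' Tu"
  assumes "prob_space M"
    and "Tu \<in> borel_measurable M" and "Tb' \<in> borel_measurable M"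
    and "integrable M (\<lambda>x. (Tu x)\<^sup>2)" and "integrable M (\<lambda>x. (Tb' x)\<^sup>2)"
    and "integral\<^sup>L M Tu = \<theta>\<^sub>0" and "integral\<^sup>L M Tb' = \<theta>\<^sub>0"
    and "filterlim \<mu> at_top sequentially"
    and "\<sigma>u2 > 0" and "\<sigma>u2 + \<sigma>b2 - 2 * \<sigma>bu > 0"
  shows "(\<lambda>k. integral\<^sup>L M (\<lambda>x.
            (let lam = (\<sigma>u2 - \<sigma>bu) / ((Tu x - Tb k x)\<^sup>2 + \<sigma>u2 + \<sigma>b2 - 2 * \<sigma>bu)
             in (lam * Tb k x + (1 - lam) * Tu x - \<theta>\<^sub>0)\<^sup>2)))
         \<longlonglongrightarrow> \<sigma>u2"
proof -
  interpret prob_space M by fact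
  note [measurable] = assms(6,7)
  define c where "c = \<sigma>u2 - \<sigma>bu"
  define s where "s = \<sigma>u2 + \<sigma>b2 - 2 * \<sigma>bu"
  define h where "h k x = c * ((Tu x - Tb k x) / ((Tu x - Tb k x)\<^sup>2 + s))" for k x
  have "s > 0"
    using assms(14) by (simp add: s_def)
  have error_eq: "(let lam = (\<sigma>u2 - \<sigma>bu) / ((Tu x - Tb k x)\<^sup>2 + \<sigma>u2 + \<sigma>b2 - 2 * \<sigma>bu)
      in (lam * Tb k x + (1 - lam) * Tu x - \<theta>\<^sub>0)\<^sup>2) = (Tu x - \<theta>\<^sub>0 - h k x)\<^sup>2" for k x
  proof -
    have den: "(Tu x - Tb k x)\<^sup>2 + \<sigma>u2 + \<sigma>b2 - 2 * \<sigma>bu = (Tu x - Tb k x)\<^sup>2 + s"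
      by (simp add: s_def)
    have comb: "lam * Tb k x + (1 - lam) * Tu x - \<theta>\<^sub>0 = Tu x - \<theta>\<^sub>0 - lam * (Tu x - Tb k x)"
      for lam
      by (simp add: algebra_simps)
    show ?thesis
      unfolding Let_def den comb h_def c_def by simp
  qed
  have h_measurable: "h k \<in> borel_measurable M" for k
    unfolding h_def Tb_def by measurable
  have h_bounded: "\<bar>h k x\<bar> \<le> \<bar>c\<bar> * (1 / s + 1)" for k x
    unfolding h_def abs_mult by (intro mult_left_mono abs_divide_square_add_le \<open>s > 0\<close>) auto
  have h_tendsto: "(\<lambda>k. h k x) \<longlonglongrightarrow> 0" for x
  proof -
    have "filterlim (\<lambda>k. (Tb' x - Tu x) + \<mu> k) at_top sequentially"
      by (rule filterlim_tendsto_add_at_top[OF tendsto_const assms(12)])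
    then have "filterlim (\<lambda>k. Tu x - Tb k x) at_bot sequentially"
      unfolding Tb_def by (subst filterlim_uminus_at_bot) (simp add: algebra_simps)
    moreover have "((\<lambda>t. t / (t\<^sup>2 + s)) \<longlongrightarrow> 0) at_bot"
      by (rule tendsto_mono[OF at_bot_le_at_infinity
            tendsto_divide_square_add_at_infinity[OF \<open>s > 0\<close>]])
    ultimately show ?thesis
      unfolding h_def using filterlim_compose tendsto_mult_right_zero by blast
  qed
  have error_integrable: "integrable M (\<lambda>x. (Tu x - \<theta>\<^sub>0)\<^sup>2)"
    using assms(8) square_integrable_imp_integrable[OF _ assms(8)] by (simp add: power2_diff)
  have "(\<lambda>k. \<integral>x. (Tu x - \<theta>\<^sub>0 - h k x)\<^sup>2 \<partial>M) \<longlonglongrightarrow> (\<integral>x. (Tu x - \<theta>\<^sub>0)\<^sup>2 \<partial>M)"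
    by (rule integral_square_diff_tendsto[OF _ h_measurable error_integrable h_bounded h_tendsto])
      measurable
  moreover have "(\<integral>x. (Tu x - \<theta>\<^sub>0)\<^sup>2 \<partial>M) = \<sigma>u2"
    unfolding \<sigma>u2_def assms(10) ..
  ultimately show ?thesis
    unfolding error_eq by simp
qed

end
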